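(* Let $g\geq 1$. For any algebra morphism (representation) $\mathbb{Z}[\mathbb{H}_g]\to M_d(\mathbb{C})$, there exist integers $N,k\geq 1$ such that $(\sigma^{2N}-1)^k$ lies in its kernel. In particular $\mathbb{Z}[\mathbb{H}_g]$ admits no faithful finite-dimensional complex representation.
   Context: $\mathbb{H}_g$ is the Heisenberg group with presentation $\langle a_1,b_1,\dots,a_g,b_g,\sigma \mid [a_i,a_j],[b_i,b_j],[\sigma,a_i],[\sigma,b_i],[a_i,b_j]\sigma^{-2\delta_{ij}}\rangle$, where $\delta_{ij}$ is the Kronecker symbol. *)

theory Defs
  imports "Jordan_Normal_Form.Matrix"
begin

definition inv_pair :: "nat \<Rightarrow> complex mat \<Rightarrow> complex mat \<Rightarrow> bool" where
  "inv_pair d X Y \<longleftrightarrow> X \<in> carrier_mat d d \<and> Y \<in> carrier_mat d d \<and>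
     X * Y = 1\<^sub>m d \<and> Y * X = 1\<^sub>m d"

definition comm_mat :: "complex mat \<Rightarrow> complex mat \<Rightarrow> complex mat \<Rightarrow> complex mat \<Rightarrow> complex mat" where
  "comm_mat X Xinv Y Yinv = X * Y * Xinv * Yinv"

text \<open>A representation of Z[H_g] in M_d(C): by the universal properties of group rings and of
  group presentations, it is the same as invertible matrices A_i, B_i (i < g; generators
  a_1..a_g, b_1..b_g indexed by 0..g-1) and S (for sigma), satisfying the defining relations
  of H_g.\<close>
definition heis_rep ::
  "nat \<Rightarrow> nat \<Rightarrow> (nat \<Rightarrow> complex mat) \<Rightarrow> (nat \<Rightarrow> complex mat) \<Rightarrow> (nat \<Rightarrow> complex mat)
     \<Rightarrow> (nat \<Rightarrow> complex mat) \<Rightarrow> complex mat \<Rightarrow> complex mat \<Rightarrow> bool" where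
  "heis_rep g d A Ainv B Binv S Sinv \<longleftrightarrow>
     (\<forall>i<g. inv_pair d (A i) (Ainv i) \<and> inv_pair d (B i) (Binv i)) \<and> inv_pair d S Sinv \<and>
     (\<forall>i<g. \<forall>j<g. comm_mat (A i) (Ainv i) (A j) (Ainv j) = 1\<^sub>m d) \<and>
     (\<forall>i<g. \<forall>j<g. comm_mat (B i) (Binv i) (B j) (Binv j) = 1\<^sub>m d) \<and>
     (\<forall>i<g. comm_mat S Sinv (A i) (Ainv i) = 1\<^sub>m d) \<and>
     (\<forall>i<g. comm_mat S Sinv (B i) (Binv i) = 1\<^sub>m d) \<and>
     (\<forall>i<g. \<forall>j<g. comm_mat (A i) (Ainv i) (B j) (Binv j) * (if i = j then Sinv ^\<^sub>m 2 else 1\<^sub>m d) = 1\<^sub>m d)"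

end

theory Submission
  imports Defs "Jordan_Normal_Form.Schur_Decomposition"
begin

(* Let T = S^2. The relations of H_g make T the commutator of the images of a_1 and b_1, and T
   commutes with both. Given an eigenvalue lam of T, triangularise T so that the m diagonal entries
   equal to lam come first. A matrix commuting with this triangular form preserves the span of the
   first m basis vectors (the generalised lam-eigenspace), so restricting to that span T is still a
   commutator, and lam^m, its determinant there, equals 1. Thus every eigenvalue of T is a root of
   unity of order at most d, T^(d!) is unipotent, and (S^(2 d!) - 1)^(d+1) = 0. *)

lemma pow_mat_add:
  assumes "(A :: 'a::semiring_1 mat) \<in> carrier_mat n n"
  shows "A ^\<^sub>m (k + l) = A ^\<^sub>m k * A ^\<^sub>m l"
  using assms by (induction l) (auto simp: assoc_mult_mat[of _ n n _ n _ n])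

lemma pow_mat_mult:
  assumes "(A :: 'a::semiring_1 mat) \<in> carrier_mat n n"
  shows "A ^\<^sub>m (k * l) = (A ^\<^sub>m k) ^\<^sub>m l"
proof (induction l)
  case (Suc l)
  have "A ^\<^sub>m (k * Suc l) = A ^\<^sub>m (k * l) * A ^\<^sub>m k"
    using pow_mat_add[OF assms, of "k * l" k] by (simp add: add.commute)
  then show ?case using Suc by simp
qed simp

lemma pow_mat_commute:
  fixes X S :: "'a::semiring_1 mat"
  assumes X: "X \<in> carrier_mat n n" and S: "S \<in> carrier_mat n n" and XS: "X * S = S * X"
  shows "X * S ^\<^sub>m k = S ^\<^sub>m k * X"
proof (induction k)
  case 0
  show ?case using X S by simp
next
  case (Suc k)
  have "X * S ^\<^sub>m Suc k = (X * S ^\<^sub>m k) * S"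
    using X S by (simp add: assoc_mult_mat[of _ n n _ n _ n])
  also have "\<dots> = S ^\<^sub>m k * (X * S)"
    using X S Suc.IH by (simp add: assoc_mult_mat[of _ n n _ n _ n])
  also have "\<dots> = S ^\<^sub>m Suc k * X"
    using X S XS by (simp add: assoc_mult_mat[of _ n n _ n _ n])
  finally show ?case .
qed

lemma mult_mat_cancel_left:
  fixes X Y Z :: "'a::semiring_1 mat"
  assumes "X \<in> carrier_mat n n" "Y \<in> carrier_mat n n" "X * Y = 1\<^sub>m n" "Z \<in> carrier_mat n k"
  shows "X * (Y * Z) = Z"
  using assms by (simp flip: assoc_mult_mat[of X n n Y n Z k])

lemma pow_mat_right_inverse:
  fixes X Y :: "'a::semiring_1 mat"
  assumes X: "X \<in> carrier_mat n n" and Y: "Y \<in> carrier_mat n n" and XY: "X * Y = 1\<^sub>m n"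
  shows "X ^\<^sub>m k * Y ^\<^sub>m k = 1\<^sub>m n"
proof (induction k)
  case (Suc k)
  have "Y ^\<^sub>m Suc k = Y * Y ^\<^sub>m k"
    using pow_mat_add[OF Y, of 1 k] Y by simp
  then have "X ^\<^sub>m Suc k * Y ^\<^sub>m Suc k = X ^\<^sub>m k * (X * (Y * Y ^\<^sub>m k))"
    using X Y by (simp add: assoc_mult_mat[of _ n n _ n _ n])
  also have "\<dots> = X ^\<^sub>m k * Y ^\<^sub>m k"
    using mult_mat_cancel_left[OF X Y XY pow_carrier_mat[OF Y]] by simp
  finally show ?case using Suc.IH by simp
qed (use X Y in simp)

lemma mat_inverse_unique:
  fixes C Y Z :: "'a::semiring_1 mat"
  assumes "C \<in> carrier_mat n n" "Y \<in> carrier_mat n n" "Z \<in> carrier_mat n n"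
    and "C * Y = 1\<^sub>m n" "Y * Z = 1\<^sub>m n"
  shows "C = Z"
proof -
  have "C = C * (Y * Z)" using assms(1,5) by simp
  also have "\<dots> = (C * Y) * Z" using assms(1-3) by (simp add: assoc_mult_mat[of _ n n _ n _ n])
  also have "\<dots> = Z" using assms by simp
  finally show ?thesis .
qed

lemma commute_if_commutator_eq_one:
  fixes X Xi Y Yi :: "'a::semiring_1 mat"
  assumes c: "X \<in> carrier_mat n n" "Xi \<in> carrier_mat n n"
      "Y \<in> carrier_mat n n" "Yi \<in> carrier_mat n n"
    and "Xi * X = 1\<^sub>m n" "Yi * Y = 1\<^sub>m n" and "X * Y * Xi * Yi = 1\<^sub>m n"
  shows "X * Y = Y * X"
proof (rule mat_inverse_unique)
  show "X * Y * (Xi * Yi) = 1\<^sub>m n"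
    using assms by (simp add: assoc_mult_mat[of _ n n _ n _ n])
  show "Xi * Yi * (Y * X) = 1\<^sub>m n"
    using assms by (simp add: assoc_mult_mat[of _ n n _ n _ n] mult_mat_cancel_left[of Yi n Y])
qed (use c in auto)

lemma commute_inverse_mat:
  fixes X Y Yi :: "'a::semiring_1 mat"
  assumes "X \<in> carrier_mat n n" "Y \<in> carrier_mat n n" "Yi \<in> carrier_mat n n"
    and "Y * Yi = 1\<^sub>m n" "Yi * Y = 1\<^sub>m n" and XY: "X * Y = Y * X"
  shows "X * Yi = Yi * X"
proof -
  have "Yi * X * Y = Yi * (Y * X)"
    using assms by (simp add: XY[symmetric])
  also have "\<dots> = X"
    using assms by (simp add: mult_mat_cancel_left[of Yi n Y])
  finally have "Yi * X * Y * Yi = X * Yi" by simp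
  moreover have "Yi * X * Y * Yi = Yi * X"
    using assms(1-4) by (simp add: assoc_mult_mat[of _ n n _ n _ n])
  ultimately show ?thesis by simp
qed

lemma sum_lessThan_eq_single:
  fixes f :: "nat \<Rightarrow> 'a::comm_monoid_add"
  assumes "j < n" and "\<And>k. k < n \<Longrightarrow> k \<noteq> j \<Longrightarrow> f k = 0"
  shows "(\<Sum>k<n. f k) = f j"
  using assms by (subst sum.remove[of _ j]) (auto intro!: sum.neutral)

lemma index_mult_mat_sum:
  assumes "A \<in> carrier_mat n n" "B \<in> carrier_mat n n" "i < n" "j < n"
  shows "(A * B) $$ (i,j) = (\<Sum>k<n. A $$ (i,k) * B $$ (k,j))"
  using assms by (simp add: scalar_prod_def lessThan_atLeast0)

lemma upper_triangular_mult_index: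
  fixes A B :: "'a::semiring_0 mat"
  assumes A: "A \<in> carrier_mat n n" "upper_triangular A"
    and B: "B \<in> carrier_mat n n" "upper_triangular B"
    and ij: "i < n" "j \<le> i"
  shows "(A * B) $$ (i,j) = (if i = j then A $$ (i,i) * B $$ (i,i) else 0)"
proof -
  have "(A * B) $$ (i,j) = (\<Sum>k<n. A $$ (i,k) * B $$ (k,j))"
    using index_mult_mat_sum[OF A(1) B(1)] ij by simp
  also have "\<dots> = A $$ (i,i) * B $$ (i,j)"
  proof (rule sum_lessThan_eq_single[OF ij(1)])
    fix k assume "k < n" "k \<noteq> i"
    then show "A $$ (i,k) * B $$ (k,j) = 0"
      using A B ij by (cases "k < i") (auto simp: upper_triangularD)
  qed
  finally show ?thesis
    using B ij by (auto simp: upper_triangularD)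
qed

lemma upper_triangular_pow_index:
  fixes U :: "'a::semiring_1 mat"
  assumes U: "U \<in> carrier_mat n n" "upper_triangular U" and ij: "i < n" "j \<le> i"
  shows "(U ^\<^sub>m k) $$ (i,j) = (if i = j then U $$ (i,i) ^ k else 0)"
  using ij
proof (induction k arbitrary: i j)
  case 0
  then show ?case using U by simp
next
  case (Suc k)
  have "upper_triangular (U ^\<^sub>m k)"
    using Suc.IH U by (intro upper_triangularI) auto
  then show ?case
    using upper_triangular_mult_index[OF pow_carrier_mat[OF U(1)] _ U, of k i j] Suc
    by (simp add: power_commutes)
qed

lemma strictly_upper_triangular_pow_eq_0:
  fixes M :: "'a::semiring_1 mat"
  assumes M: "M \<in> carrier_mat n n"
    and strict: "\<And>i j. i < n \<Longrightarrow> j \<le> i \<Longrightarrow> M $$ (i,j) = 0"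
  shows "M ^\<^sub>m n = 0\<^sub>m n n"
proof -
  have "(M ^\<^sub>m k) $$ (i,j) = 0" if "i < n" "j < n" "j < i + k" for i j k
    using that
  proof (induction k arbitrary: j)
    case 0
    then show ?case using M by simp
  next
    case (Suc k)
    have "(M ^\<^sub>m Suc k) $$ (i,j) = (\<Sum>l<n. (M ^\<^sub>m k) $$ (i,l) * M $$ (l,j))"
      using index_mult_mat_sum[OF pow_carrier_mat[OF M] M] Suc.prems by simp
    also have "\<dots> = 0"
    proof (intro sum.neutral ballI)
      fix l assume "l \<in> {..<n}"
      then show "(M ^\<^sub>m k) $$ (i,l) * M $$ (l,j) = 0"
        using Suc.IH[of l] strict[of l j] Suc.prems by (cases "l < i + k") auto
    qed
    finally show ?case .
  qed
  then show ?thesis using M by (intro eq_matI) auto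
qed

definition upper_left_block :: "nat \<Rightarrow> 'a mat \<Rightarrow> 'a mat" where
  "upper_left_block m X = mat m m (\<lambda>(i,j). X $$ (i,j))"

lemma upper_left_block_carrier [simp]: "upper_left_block m X \<in> carrier_mat m m"
  by (simp add: upper_left_block_def)

lemma upper_left_block_one: "m \<le> n \<Longrightarrow> upper_left_block m (1\<^sub>m n) = 1\<^sub>m m"
  by (intro eq_matI) (auto simp: upper_left_block_def)

lemma upper_left_block_mult:
  fixes X Y :: "'a::semiring_0 mat"
  assumes X: "X \<in> carrier_mat n n" and Y: "Y \<in> carrier_mat n n" and mn: "m \<le> n"
    and Y_lower_left: "\<And>k j. m \<le> k \<Longrightarrow> k < n \<Longrightarrow> j < m \<Longrightarrow> Y $$ (k,j) = 0"
  shows "upper_left_block m (X * Y) = upper_left_block m X * upper_left_block m Y"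
proof (rule eq_matI)
  fix i j assume "i < dim_row (upper_left_block m X * upper_left_block m Y)"
    and "j < dim_col (upper_left_block m X * upper_left_block m Y)"
  then have i: "i < m" and j: "j < m" by (auto simp: upper_left_block_def)
  have "upper_left_block m (X * Y) $$ (i,j) = (\<Sum>k<n. X $$ (i,k) * Y $$ (k,j))"
    using index_mult_mat_sum[OF X Y] i j mn by (simp add: upper_left_block_def)
  also have "\<dots> = (\<Sum>k<m. X $$ (i,k) * Y $$ (k,j))"
    using mn Y_lower_left j by (intro sum.mono_neutral_right) auto
  also have "\<dots> = (upper_left_block m X * upper_left_block m Y) $$ (i,j)"
    using index_mult_mat_sum[of "upper_left_block m X" m "upper_left_block m Y" i j] i j
    by (simp add: upper_left_block_def)
  finally show "upper_left_block m (X * Y) $$ (i,j)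
    = (upper_left_block m X * upper_left_block m Y) $$ (i,j)" .
qed (auto simp: upper_left_block_def)

lemma det_upper_left_block_upper_triangular:
  fixes U :: "'a::comm_ring_1 mat"
  assumes U: "U \<in> carrier_mat n n" "upper_triangular U" and mn: "m \<le> n"
    and lead: "\<And>i. i < m \<Longrightarrow> U $$ (i,i) = lam"
  shows "det (upper_left_block m U) = lam ^ m"
proof -
  have "upper_triangular (upper_left_block m U)"
    using U mn by (auto simp: upper_triangular_def upper_left_block_def)
  then have "det (upper_left_block m U) = prod_list (diag_mat (upper_left_block m U))"
    by (rule det_upper_triangular[OF _ upper_left_block_carrier])
  also have "diag_mat (upper_left_block m U) = replicate m lam"
    by (intro nth_equalityI) (auto simp: diag_mat_def upper_left_block_def lead)
  finally show ?thesis by simp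
qed

lemma commute_upper_triangular_lower_left_zero:
  fixes U X :: "'a::idom mat"
  assumes U: "U \<in> carrier_mat n n" "upper_triangular U" and X: "X \<in> carrier_mat n n"
    and lead: "\<And>i. i < m \<Longrightarrow> U $$ (i,i) = lam"
    and rest: "\<And>i. m \<le> i \<Longrightarrow> i < n \<Longrightarrow> U $$ (i,i) \<noteq> lam"
    and XU: "X * U = U * X"
    and ij: "m \<le> i" "i < n" "j < m"
  shows "X $$ (i,j) = 0"
  using ij
proof (induction "j + (n - i)" arbitrary: i j rule: less_induct)
  \<comment> \<open>the entries X(i,k), k < j, and X(k,j), k > i, entering (X U)(i,j) and (U X)(i,j)
    lie closer to the lower-left corner\<close>
  case less
  have j: "j < n" using less.prems by simp
  have "(X * U) $$ (i,j) = (\<Sum>k<n. X $$ (i,k) * U $$ (k,j))"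
    using index_mult_mat_sum[OF X U(1) less.prems(2) j] .
  also have "\<dots> = X $$ (i,j) * U $$ (j,j)"
  proof (rule sum_lessThan_eq_single[OF j])
    fix k assume "k < n" "k \<noteq> j"
    then show "X $$ (i,k) * U $$ (k,j) = 0"
      using less U by (cases "k < j") (auto simp: upper_triangularD)
  qed
  finally have XU_ij: "(X * U) $$ (i,j) = X $$ (i,j) * lam"
    using lead less.prems by simp
  have "(U * X) $$ (i,j) = (\<Sum>k<n. U $$ (i,k) * X $$ (k,j))"
    using index_mult_mat_sum[OF U(1) X less.prems(2) j] .
  also have "\<dots> = U $$ (i,i) * X $$ (i,j)"
  proof (rule sum_lessThan_eq_single[OF less.prems(2)])
    fix k assume "k < n" "k \<noteq> i"
    then show "U $$ (i,k) * X $$ (k,j) = 0"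
      using less U by (cases "k < i") (auto simp: upper_triangularD)
  qed
  finally have "X $$ (i,j) * lam = U $$ (i,i) * X $$ (i,j)"
    using XU_ij unfolding XU by simp
  then have "(lam - U $$ (i,i)) * X $$ (i,j) = 0"
    by (simp add: algebra_simps)
  then show ?case
    using rest[of i] less.prems by auto
qed

lemma upper_triangular_commutator_eigenvalue_pow:
  fixes U X Xi Y Yi :: "'a::idom mat"
  assumes U: "U \<in> carrier_mat n n" "upper_triangular U" and mn: "m \<le> n"
    and lead: "\<And>i. i < m \<Longrightarrow> U $$ (i,i) = lam"
    and rest: "\<And>i. m \<le> i \<Longrightarrow> i < n \<Longrightarrow> U $$ (i,i) \<noteq> lam"
    and X: "X \<in> carrier_mat n n" "Xi \<in> carrier_mat n n" "X * Xi = 1\<^sub>m n" "Xi * X = 1\<^sub>m n"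
    and Y: "Y \<in> carrier_mat n n" "Yi \<in> carrier_mat n n" "Y * Yi = 1\<^sub>m n" "Yi * Y = 1\<^sub>m n"
    and commutator: "X * Y * Xi * Yi = U"
    and XU: "X * U = U * X" and YU: "Y * U = U * Y"
  shows "lam ^ m = 1"
proof -
  let ?B = "upper_left_block m"
  have XiU: "Xi * U = U * Xi" and YiU: "Yi * U = U * Yi"
    using commute_inverse_mat[of U n X Xi] commute_inverse_mat[of U n Y Yi] U X Y XU YU by auto
  have block_mult: "?B (Z * W) = ?B Z * ?B W"
    if "Z \<in> carrier_mat n n" "W \<in> carrier_mat n n" "W * U = U * W" for Z W
    using upper_left_block_mult[OF that(1,2) mn]
      commute_upper_triangular_lower_left_zero[OF U that(2) lead rest that(3)] by blast
  have "?B U = ?B (X * Y * Xi) * ?B Yi"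
    unfolding commutator[symmetric] using X Y YiU by (intro block_mult) auto
  also have "?B (X * Y * Xi) = ?B (X * Y) * ?B Xi"
    using X Y XiU by (intro block_mult) auto
  also have "?B (X * Y) = ?B X * ?B Y"
    using X Y YU by (intro block_mult) auto
  finally have "lam ^ m = det (?B X) * det (?B Y) * det (?B Xi) * det (?B Yi)"
    using det_upper_left_block_upper_triangular[OF U mn lead]
    by (simp add: det_mult[of _ m] mult_carrier_mat[of _ m m _ m])
  also have "\<dots> = det (?B X * ?B Xi) * det (?B Y * ?B Yi)"
    by (simp add: det_mult[of _ m])
  also have "?B X * ?B Xi = 1\<^sub>m m"
    using block_mult[OF X(1,2) XiU] X(3) upper_left_block_one[OF mn] by metis
  also have "?B Y * ?B Yi = 1\<^sub>m m"
    using block_mult[OF Y(1,2) YiU] Y(3) upper_left_block_one[OF mn] by metis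
  finally show ?thesis by simp
qed

lemma similar_mat_wit_minus_one:
  fixes A B :: "'a::comm_ring_1 mat"
  assumes A: "A \<in> carrier_mat n n" and sim: "similar_mat_wit A B P Q"
  shows "similar_mat_wit (A - 1\<^sub>m n) (B - 1\<^sub>m n) P Q"
proof -
  note wit = similar_mat_witD2[OF A sim]
  have "P * (B - 1\<^sub>m n) * Q = P * B * Q - P * 1\<^sub>m n * Q"
    using wit by (simp add: mult_minus_distrib_mat[of _ n n] minus_mult_distrib_mat[of _ n n])
  also have "\<dots> = A - 1\<^sub>m n"
    using wit by simp
  finally show ?thesis
    using wit unfolding similar_mat_wit_def Let_def by auto
qed

lemma similar_mat_wit_conjugate_mult:
  fixes T :: "'a::semiring_1 mat"
  assumes T: "T \<in> carrier_mat n n" and sim: "similar_mat_wit T U P Q"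
    and X: "X \<in> carrier_mat n n" and Y: "Y \<in> carrier_mat n n"
  shows "Q * (X * Y) * P = (Q * X * P) * (Q * Y * P)"
proof -
  note wit = similar_mat_witD2[OF T sim]
  have "(Q * X * P) * (Q * Y * P) = Q * X * (P * (Q * (Y * P)))"
    using wit X Y by (simp add: assoc_mult_mat[of _ n n _ n _ n])
  also have "P * (Q * (Y * P)) = Y * P"
    using wit Y by (intro mult_mat_cancel_left[of P n Q]) auto
  finally show ?thesis
    using wit X Y by (simp add: assoc_mult_mat[of _ n n _ n _ n])
qed

lemma schur_decomposition_eigenvalue_first:
  fixes T :: "'a::conjugatable_ordered_field mat"
  assumes T: "T \<in> carrier_mat n n" and cp: "char_poly T = (\<Prod>e\<leftarrow>es. [:- e, 1:])"
    and lam: "lam \<in> set es"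
  obtains U P Q m where "similar_mat_wit T U P Q" "upper_triangular U" "1 \<le> m" "m \<le> n"
    "\<And>i. i < m \<Longrightarrow> U $$ (i,i) = lam"
    "\<And>i. m \<le> i \<Longrightarrow> i < n \<Longrightarrow> U $$ (i,i) \<noteq> lam"
proof -
  define eqs where "eqs = filter (\<lambda>e. e = lam) es"
  define neqs where "neqs = filter (\<lambda>e. e \<noteq> lam) es"
  define m where "m = length eqs"
  have "mset (eqs @ neqs) = mset es"
    unfolding eqs_def neqs_def by simp
  then have "char_poly T = (\<Prod>e\<leftarrow>eqs @ neqs. [:- e, 1:])"
    unfolding cp prod_mset_prod_list[symmetric] mset_map by simp
  moreover obtain U P Q where "schur_decomposition T (eqs @ neqs) = (U, P, Q)"
    by (metis prod_cases3)
  ultimately have sim: "similar_mat_wit T U P Q" and ut: "upper_triangular U"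
    and diag: "diag_mat U = eqs @ neqs"
    using schur_decomposition[OF T] by blast+
  have U: "U \<in> carrier_mat n n"
    using similar_mat_witD2[OF T sim] by simp
  then have len: "length (eqs @ neqs) = n"
    and diag_nth: "\<And>i. i < n \<Longrightarrow> U $$ (i,i) = (eqs @ neqs) ! i"
    unfolding diag[symmetric] diag_mat_def by auto
  show thesis
  proof (rule that[OF sim ut])
    show "1 \<le> m"
      using lam unfolding m_def eqs_def by (simp add: Suc_le_eq filter_empty_conv)
    show "m \<le> n"
      using len unfolding m_def by simp
    show "U $$ (i,i) = lam" if "i < m" for i
      using that diag_nth[of i] len nth_mem[of i eqs]
      unfolding m_def by (simp add: nth_append eqs_def)
    show "U $$ (i,i) \<noteq> lam" if "m \<le> i" "i < n" for i
      using that diag_nth[of i] len nth_mem[of "i - m" neqs]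
      unfolding m_def by (simp add: nth_append neqs_def)
  qed
qed

lemma commutator_eigenvalue_root_of_unity:
  fixes T X Xi Y Yi :: "'a::conjugatable_ordered_field mat"
  assumes T: "T \<in> carrier_mat n n"
    and X: "X \<in> carrier_mat n n" "Xi \<in> carrier_mat n n" "X * Xi = 1\<^sub>m n" "Xi * X = 1\<^sub>m n"
    and Y: "Y \<in> carrier_mat n n" "Yi \<in> carrier_mat n n" "Y * Yi = 1\<^sub>m n" "Yi * Y = 1\<^sub>m n"
    and commutator: "X * Y * Xi * Yi = T"
    and XT: "X * T = T * X" and YT: "Y * T = T * Y"
    and cp: "char_poly T = (\<Prod>e\<leftarrow>es. [:- e, 1:])" and lam: "lam \<in> set es"
  shows "\<exists>m. 1 \<le> m \<and> m \<le> n \<and> lam ^ m = 1"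
proof -
  obtain U P Q m where sim: "similar_mat_wit T U P Q" and ut: "upper_triangular U"
    and m: "1 \<le> m" "m \<le> n"
    and lead: "\<And>i. i < m \<Longrightarrow> U $$ (i,i) = lam"
    and rest: "\<And>i. m \<le> i \<Longrightarrow> i < n \<Longrightarrow> U $$ (i,i) \<noteq> lam"
    using schur_decomposition_eigenvalue_first[OF T cp lam] by blast
  note wit = similar_mat_witD2[OF T sim]
  define conj where "conj Z = Q * Z * P" for Z
  have conj_carrier: "conj Z \<in> carrier_mat n n" if "Z \<in> carrier_mat n n" for Z
    using that wit unfolding conj_def by simp
  have conj_mult: "conj (Z * W) = conj Z * conj W"
    if "Z \<in> carrier_mat n n" "W \<in> carrier_mat n n" for Z W
    unfolding conj_def using similar_mat_wit_conjugate_mult[OF T sim that] .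
  have conj_one: "conj (1\<^sub>m n) = 1\<^sub>m n"
    unfolding conj_def using wit by simp
  have conj_T: "conj T = U"
    unfolding conj_def using similar_mat_witD2(3)[OF wit(5) similar_mat_wit_sym[OF sim]] by simp
  have conj_commute: "conj Z * U = U * conj Z" if "Z \<in> carrier_mat n n" "Z * T = T * Z" for Z
    unfolding conj_T[symmetric] by (simp only: conj_mult[symmetric] that T)
  have "lam ^ m = 1"
  proof (rule upper_triangular_commutator_eigenvalue_pow[OF wit(5) ut m(2) lead rest])
    show "conj X * conj Y * conj Xi * conj Yi = U"
      by (simp only: conj_mult[symmetric] mult_carrier_mat[of _ n n _ n] X(1,2) Y(1,2)
          commutator conj_T)
    show "conj X * conj Xi = 1\<^sub>m n" "conj Xi * conj X = 1\<^sub>m n"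
      by (simp_all only: conj_mult[symmetric] X conj_one)
    show "conj Y * conj Yi = 1\<^sub>m n" "conj Yi * conj Y = 1\<^sub>m n"
      by (simp_all only: conj_mult[symmetric] Y conj_one)
    show "conj X * U = U * conj X" "conj Y * U = U * conj Y"
      using X Y XT YT conj_commute by auto
  qed (use X Y conj_carrier in auto)
  then show ?thesis
    using m by blast
qed

lemma pow_minus_one_nilpotent_if_eigenvalues_roots_of_unity:
  fixes T :: "'a::conjugatable_ordered_field mat"
  assumes T: "T \<in> carrier_mat n n" and cp: "char_poly T = (\<Prod>e\<leftarrow>es. [:- e, 1:])"
    and roots: "\<And>e. e \<in> set es \<Longrightarrow> e ^ N = 1"
  shows "(T ^\<^sub>m N - 1\<^sub>m n) ^\<^sub>m n = 0\<^sub>m n n"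
proof -
  obtain U P Q where "schur_decomposition T es = (U, P, Q)"
    by (metis prod_cases3)
  from schur_decomposition[OF T cp this]
  have sim: "similar_mat_wit T U P Q" and ut: "upper_triangular U" and diag: "diag_mat U = es"
    by auto
  note wit = similar_mat_witD2[OF T sim]
  have strict: "(U ^\<^sub>m N - 1\<^sub>m n) $$ (i,j) = 0" if "i < n" "j \<le> i" for i j
  proof -
    have "U $$ (i,i) \<in> set es"
      using that wit unfolding diag[symmetric] diag_mat_def by auto
    then show ?thesis
      using upper_triangular_pow_index[OF wit(5) ut that, of N] that wit roots by auto
  qed
  have "similar_mat_wit (T ^\<^sub>m N - 1\<^sub>m n) (U ^\<^sub>m N - 1\<^sub>m n) P Q"
    using similar_mat_wit_minus_one[OF _ similar_mat_wit_pow[OF sim]] T by simp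
  then have "(T ^\<^sub>m N - 1\<^sub>m n) ^\<^sub>m n = P * (U ^\<^sub>m N - 1\<^sub>m n) ^\<^sub>m n * Q"
    by (rule similar_mat_wit_pow_id)
  also have "(U ^\<^sub>m N - 1\<^sub>m n) ^\<^sub>m n = 0\<^sub>m n n"
    by (rule strictly_upper_triangular_pow_eq_0) (use strict wit in auto)
  finally show ?thesis
    using wit by simp
qed

lemma inv_pair_pow: "inv_pair d X Y \<Longrightarrow> inv_pair d (X ^\<^sub>m k) (Y ^\<^sub>m k)"
  unfolding inv_pair_def using pow_mat_right_inverse by auto

lemma heis_rep_commutator_eq_central_square:
  assumes rep: "heis_rep g d A Ainv B Binv S Sinv" and i: "i < g"
  shows "A i * B i * Ainv i * Binv i = S ^\<^sub>m 2"
    and "A i * S ^\<^sub>m 2 = S ^\<^sub>m 2 * A i"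
    and "B i * S ^\<^sub>m 2 = S ^\<^sub>m 2 * B i"
proof -
  from rep i have a: "inv_pair d (A i) (Ainv i)" and b: "inv_pair d (B i) (Binv i)"
    and s: "inv_pair d S Sinv"
    and SA: "comm_mat S Sinv (A i) (Ainv i) = 1\<^sub>m d"
    and SB: "comm_mat S Sinv (B i) (Binv i) = 1\<^sub>m d"
    unfolding heis_rep_def by auto
  from rep have "\<forall>i<g. \<forall>j<g. comm_mat (A i) (Ainv i) (B j) (Binv j) *
      (if i = j then Sinv ^\<^sub>m 2 else 1\<^sub>m d) = 1\<^sub>m d"
    unfolding heis_rep_def by blast
  from this[rule_format, OF i i]
  have AB: "comm_mat (A i) (Ainv i) (B i) (Binv i) * Sinv ^\<^sub>m 2 = 1\<^sub>m d" by simp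
  have s2: "inv_pair d (S ^\<^sub>m 2) (Sinv ^\<^sub>m 2)"
    using inv_pair_pow[OF s] .
  show "A i * B i * Ainv i * Binv i = S ^\<^sub>m 2"
    by (rule mat_inverse_unique[of _ d "Sinv ^\<^sub>m 2"])
      (use a b s2 AB in \<open>auto simp: inv_pair_def comm_mat_def\<close>)
  have "S * A i = A i * S"
    using commute_if_commutator_eq_one[of S d Sinv "A i" "Ainv i"] s a SA
    by (auto simp: inv_pair_def comm_mat_def)
  then show "A i * S ^\<^sub>m 2 = S ^\<^sub>m 2 * A i"
    using pow_mat_commute[of "A i" d S 2] a s by (auto simp: inv_pair_def)
  have "S * B i = B i * S"
    using commute_if_commutator_eq_one[of S d Sinv "B i" "Binv i"] s b SB
    by (auto simp: inv_pair_def comm_mat_def)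
  then show "B i * S ^\<^sub>m 2 = S ^\<^sub>m 2 * B i"
    using pow_mat_commute[of "B i" d S 2] b s by (auto simp: inv_pair_def)
qed

theorem mainTheorem4:
  fixes g d :: nat and A Ainv B Binv :: "nat \<Rightarrow> complex mat" and S Sinv :: "complex mat"
  assumes "g \<ge> 1"
    and "heis_rep g d A Ainv B Binv S Sinv"
  shows "\<exists>N k :: nat. N \<ge> 1 \<and> k \<ge> 1 \<and> (S ^\<^sub>m (2 * N) - 1\<^sub>m d) ^\<^sub>m k = 0\<^sub>m d d"
proof -
  define T where "T = S ^\<^sub>m 2"
  have g: "0 < g" using assms(1) by simp
  from assms(2) g have a: "inv_pair d (A 0) (Ainv 0)" and b: "inv_pair d (B 0) (Binv 0)"
    and S: "S \<in> carrier_mat d d"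
    unfolding heis_rep_def inv_pair_def by auto
  note relations = heis_rep_commutator_eq_central_square[OF assms(2) g, folded T_def]
  have T: "T \<in> carrier_mat d d" using S unfolding T_def by simp
  obtain es where cp: "char_poly T = (\<Prod>e\<leftarrow>es. [:- e, 1:])"
    using char_poly_factorized[OF T] by blast
  have "e ^ fact d = 1" if e: "e \<in> set es" for e
  proof -
    obtain m where "1 \<le> m" "m \<le> d" "e ^ m = 1"
      using commutator_eigenvalue_root_of_unity[OF T _ _ _ _ _ _ _ _ relations cp e]
        a b unfolding inv_pair_def by blast
    moreover from this obtain r where "fact d = m * r"
      using dvd_fact[of m d] by auto
    ultimately show ?thesis
      by (simp add: power_mult)
  qed
  then have "(T ^\<^sub>m fact d - 1\<^sub>m d) ^\<^sub>m d = 0\<^sub>m d d"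
    by (rule pow_minus_one_nilpotent_if_eigenvalues_roots_of_unity[OF T cp])
  moreover have "S ^\<^sub>m (2 * fact d) = T ^\<^sub>m fact d"
    unfolding T_def by (rule pow_mat_mult[OF S])
  ultimately have "(S ^\<^sub>m (2 * fact d) - 1\<^sub>m d) ^\<^sub>m Suc d = 0\<^sub>m d d"
    using T by simp
  then show ?thesis
    by (intro exI[of _ "fact d"] exI[of _ "Suc d"]) simp
qed

end
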